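(* Let $\mathcal N'$ be the set of pairs of integers $(p,u)$ such that either $p=1$ and $u=0$, or $u=2n\geq 2^m\geq p\geq 2$ for some integers $m,n$. Let $\mathcal N=\mathcal N'\cup\{(p,\infty): p\geq 2 \text{ an integer or } p=\infty\}$. If $F$ is a real field, then $(p(F),u(F))\in\mathcal N$. If in addition $I^k_tF=0$ for some $k\geq 1$, then $p(F)\leq 2^{k-1}$.
   Context: All fields have characteristic $\neq 2$, forms are nondegenerate and finite-dimensional. A field is real if it admits an ordering. $WF$ is the Witt ring, $IF$ its fundamental ideal, $I^kF$ its $k$-th power, $W_tF$ the torsion part of $WF$ (for real $F$, the forms of signature $0$ at every ordering), and $I^k_tF=I^kF\cap W_tF$. The Pythagoras number $p(F)$ is the least integer $p\geq1$ such that every sum of squares in $F$ is a sum of $p$ squares ($\infty$ if none exists). The $u$-invariant $u(F)$ is the supremum of dimensions of anisotropic forms over $F$ whose class lies in $W_tF$ (torsion forms); for nonreal $F$ this is the supremum of dimensions of all anisotropic forms. *)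

theory Defs
  imports Main "HOL-Library.Extended_Nat"
begin

text \<open>Fields of characteristic not 2 are types of class field with 2 \<noteq> 0.
  Since char \<noteq> 2, every nondegenerate quadratic form is diagonalizable, so a
  (nondegenerate) form of dimension n is represented by a list of n nonzero
  diagonal entries.  Vectors are functions nat \<Rightarrow> 'a, of which only the
  entries with index < n matter.\<close>

definition is_form :: "'a::field list \<Rightarrow> bool" where
  "is_form a \<longleftrightarrow> (\<forall>x\<in>set a. x \<noteq> 0)"

definition qval :: "'a::field list \<Rightarrow> (nat \<Rightarrow> 'a) \<Rightarrow> 'a" where
  "qval a x = (\<Sum>i<length a. a ! i * (x i)^2)"

definition isotropic :: "'a::field list \<Rightarrow> bool" where
  "isotropic a \<longleftrightarrow> (\<exists>x. (\<exists>i<length a. x i \<noteq> 0) \<and> qval a x = 0)"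

definition anisotropic :: "'a::field list \<Rightarrow> bool" where
  "anisotropic a \<longleftrightarrow> \<not> isotropic a"

definition linmap :: "nat \<Rightarrow> (nat \<Rightarrow> nat \<Rightarrow> 'a::field) \<Rightarrow> (nat \<Rightarrow> 'a) \<Rightarrow> (nat \<Rightarrow> 'a)" where
  "linmap n M x = (\<lambda>i. \<Sum>j<n. M i j * x j)"

definition isometric :: "'a::field list \<Rightarrow> 'a list \<Rightarrow> bool" where
  "isometric a b \<longleftrightarrow> length a = length b \<and>
     (\<exists>M. (\<forall>x. (\<forall>i<length a. linmap (length a) M x i = 0) \<longrightarrow> (\<forall>j<length a. x j = 0))
         \<and> (\<forall>x. qval a (linmap (length a) M x) = qval b x))"

definition hyperbolic :: "'a::field list \<Rightarrow> bool" where
  "hyperbolic a \<longleftrightarrow> (\<exists>k. isometric a (concat (replicate k [1, -1])))"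

definition witt_equiv :: "'a::field list \<Rightarrow> 'a list \<Rightarrow> bool" where
  "witt_equiv a b \<longleftrightarrow> hyperbolic (a @ map uminus b)"

definition torsion_form :: "'a::field list \<Rightarrow> bool" where
  "torsion_form a \<longleftrightarrow> (\<exists>m\<ge>1. hyperbolic (concat (replicate m a)))"

text \<open>Pfister form <<a1,...,ak>> = <1,-a1> \<otimes> ... \<otimes> <1,-ak>.\<close>
fun pfister :: "'a::field list \<Rightarrow> 'a list" where
  "pfister [] = [1]"
| "pfister (x # xs) = pfister xs @ map (\<lambda>y. (- x) * y) (pfister xs)"

text \<open>The Witt class of a lies in I^k F (additively generated by k-fold Pfister
  forms; negatives are scalar multiples, so I^k consists of the classes of
  orthogonal sums of scaled k-fold Pfister forms).\<close>
definition in_Ik :: "nat \<Rightarrow> 'a::field list \<Rightarrow> bool" where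
  "in_Ik k a \<longleftrightarrow> (\<exists>cs :: ('a \<times> 'a list) list.
      (\<forall>(c, as) \<in> set cs. c \<noteq> 0 \<and> length as = k \<and> (\<forall>x\<in>set as. x \<noteq> 0)) \<and>
      witt_equiv a (concat (map (\<lambda>(c, as). map (\<lambda>y. c * y) (pfister as)) cs)))"

definition Ikt_zero :: "'a::field itself \<Rightarrow> nat \<Rightarrow> bool" where
  "Ikt_zero _ k \<longleftrightarrow> (\<forall>a :: 'a list. is_form a \<and> in_Ik k a \<and> torsion_form a \<longrightarrow> hyperbolic a)"

definition is_ordering :: "'a::field set \<Rightarrow> bool" where
  "is_ordering P \<longleftrightarrow> (\<forall>x\<in>P. \<forall>y\<in>P. x + y \<in> P \<and> x * y \<in> P) \<and>
     (\<forall>x. x \<in> P \<or> - x \<in> P) \<and> (\<forall>x. x \<in> P \<and> - x \<in> P \<longrightarrow> x = 0)"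

definition real_field :: "'a::field itself \<Rightarrow> bool" where
  "real_field _ \<longleftrightarrow> (\<exists>P :: 'a set. is_ordering P)"

definition sum_of_squares :: "nat \<Rightarrow> 'a::field \<Rightarrow> bool" where
  "sum_of_squares n y \<longleftrightarrow> (\<exists>x :: nat \<Rightarrow> 'a. y = (\<Sum>i<n. (x i)^2))"

definition pyth_prop :: "'a::field itself \<Rightarrow> nat \<Rightarrow> bool" where
  "pyth_prop _ p \<longleftrightarrow> p \<ge> 1 \<and> (\<forall>y :: 'a. (\<exists>n. sum_of_squares n y) \<longrightarrow> sum_of_squares p y)"

definition pythagoras_number :: "'a::field itself \<Rightarrow> enat" where
  "pythagoras_number T = (if \<exists>p. pyth_prop T p then enat (LEAST p. pyth_prop T p) else \<infinity>)"

definition u_invariant :: "'a::field itself \<Rightarrow> enat" where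
  "u_invariant _ = Sup {enat (length a) | a :: 'a list. is_form a \<and> anisotropic a \<and> torsion_form a}"

definition admissible_pairs :: "(enat \<times> enat) set" where
  "admissible_pairs =
     {(p, u). (p = 1 \<and> u = 0) \<or>
              (\<exists>m n :: nat. u = enat (2 * n) \<and> 2 * n \<ge> 2 ^ m \<and> enat (2 ^ m) \<ge> p \<and> p \<ge> 2)}
     \<union> {(p, u). u = \<infinity> \<and> p \<ge> 2}"

end

theory Submission
  imports Defs "HOL-Combinatorics.Permutations"
begin

text \<open>If some sum of squares s is not a sum of \<open>2^k\<close> squares,
  the Pfister form \<open>\<langle>\<langle>s, -1, \<dots>, -1\<rangle>\<rangle> = 2^k\<langle>1\<rangle> \<perp> 2^k\<langle>-s\<rangle>\<close> is anisotropic, because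
  the nonzero sums of \<open>2^k\<close> squares form a group (Pfister); it is torsion, because 1/s is
  a sum of squares; and it lies in \<open>I^(k+1) F\<close>.  So \<open>p(F) > 2^k\<close> forces \<open>u(F) \<ge> 2^(k+1)\<close>,
  which yields \<open>p(F) \<le> 2^m \<le> u(F)\<close> when u(F) is finite, and \<open>I^k_t F = 0\<close> forces
  \<open>p(F) \<le> 2^(k-1)\<close>.  By Sylvester's law of inertia a torsion form has as many positive as
  negative entries at an ordering, so u(F) is even.  Finally, if \<open>p(F) = 1\<close> then \<open>a \<perp> a\<close> is
  anisotropic with a, so some multiple of a nonzero anisotropic torsion form would be both
  anisotropic and hyperbolic; hence \<open>u(F) = 0\<close>.\<close>

definition sumsq :: "nat \<Rightarrow> (nat \<Rightarrow> 'a::field) \<Rightarrow> 'a" where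
  "sumsq n x = (\<Sum>i<n. (x i)^2)"

definition drop_vec :: "nat \<Rightarrow> (nat \<Rightarrow> 'a) \<Rightarrow> nat \<Rightarrow> 'a" where
  "drop_vec n x = (\<lambda>i. x (i + n))"

definition append_vec :: "nat \<Rightarrow> (nat \<Rightarrow> 'a) \<Rightarrow> (nat \<Rightarrow> 'a) \<Rightarrow> nat \<Rightarrow> 'a" where
  "append_vec n p q = (\<lambda>i. if i < n then p i else q (i - n))"

lemma sum_lessThan_add:
  "(\<Sum>i<m + n. (f::nat \<Rightarrow> 'b::comm_monoid_add) i) = (\<Sum>i<m. f i) + (\<Sum>i<n. f (i + m))"
  by (induction n) (auto simp: add.commute add.left_commute)

lemma drop_vec_append_vec [simp]: "drop_vec n (append_vec n p q) = q"
  by (simp add: drop_vec_def append_vec_def)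

lemma vec_zero_if_halves_zero:
  assumes "\<forall>i<n. x i = 0" and "\<forall>i<n. drop_vec n x i = 0"
  shows "\<forall>i<n + n. x i = 0"
  using assms by (metis add.commute add_diff_inverse_nat drop_vec_def nat_add_left_cancel_less)

lemma qval_cong: "(\<And>i. i < length a \<Longrightarrow> x i = y i) \<Longrightarrow> qval a x = qval a y"
  by (simp add: qval_def)

lemma qval_zero [simp]: "qval a (\<lambda>i. 0) = 0"
  by (simp add: qval_def)

lemma qval_append: "qval (a @ b) x = qval a x + qval b (drop_vec (length a) x)"
  by (simp add: qval_def drop_vec_def nth_append sum_lessThan_add)

lemma qval_replicate: "qval (replicate n c) x = c * sumsq n x"
  by (simp add: qval_def sumsq_def sum_distrib_left)

lemma qval_uminus: "qval (map uminus a) x = - qval a x"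
  by (simp add: qval_def sum_negf)

lemma qval_scale: "qval a (\<lambda>i. c * x i) = c^2 * qval a x"
  unfolding qval_def sum_distrib_left
  by (rule sum.cong) (simp_all add: power_mult_distrib mult.left_commute)

lemma qval_lincomb:
  "qval a (\<lambda>i. s * x i + t * y i) =
     s^2 * qval a x + 2 * s * t * (\<Sum>i<length a. a ! i * x i * y i) + t^2 * qval a y"
proof -
  have "qval a (\<lambda>i. s * x i + t * y i) = (\<Sum>i<length a. s^2 * (a ! i * (x i)^2)
          + 2 * s * t * (a ! i * x i * y i) + t^2 * (a ! i * (y i)^2))"
    unfolding qval_def by (rule sum.cong) (simp_all add: power2_eq_square algebra_simps)
  then show ?thesis
    by (simp add: qval_def sum.distrib sum_distrib_left)
qed

lemma sumsq_cong: "(\<And>i. i < n \<Longrightarrow> x i = y i) \<Longrightarrow> sumsq n x = sumsq n y"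
  by (simp add: sumsq_def)

lemma sumsq_add: "sumsq (n + n) x = sumsq n x + sumsq n (drop_vec n x)"
  unfolding sumsq_def drop_vec_def by (rule sum_lessThan_add)

lemma sumsq_append_vec: "sumsq (n + n) (append_vec n p q) = sumsq n p + sumsq n q"
proof -
  have "sumsq n (append_vec n p q) = sumsq n p"
    by (rule sumsq_cong) (simp add: append_vec_def)
  then show ?thesis by (simp add: sumsq_add)
qed

lemma sumsq_scale: "sumsq n (\<lambda>i. c * x i) = c^2 * sumsq n x"
  by (simp add: sumsq_def sum_distrib_left power_mult_distrib)

lemma sum_of_squares_iff_sumsq: "sum_of_squares n y \<longleftrightarrow> (\<exists>x. y = sumsq n x)"
  by (simp add: sum_of_squares_def sumsq_def)

lemma ordering_add: "is_ordering P \<Longrightarrow> x \<in> P \<Longrightarrow> y \<in> P \<Longrightarrow> x + y \<in> P"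
  by (simp add: is_ordering_def)

lemma ordering_mult: "is_ordering P \<Longrightarrow> x \<in> P \<Longrightarrow> y \<in> P \<Longrightarrow> x * y \<in> P"
  by (simp add: is_ordering_def)

lemma ordering_antisym: "is_ordering P \<Longrightarrow> x \<in> P \<Longrightarrow> - x \<in> P \<Longrightarrow> x = 0"
  by (simp add: is_ordering_def)

lemma ordering_uminus_notin: "is_ordering P \<Longrightarrow> x \<notin> P \<Longrightarrow> - x \<in> P"
  by (auto simp: is_ordering_def)

lemma ordering_square: assumes "is_ordering P" shows "x^2 \<in> P"
proof (cases "x \<in> P")
  case True
  then show ?thesis using ordering_mult[OF assms] by (simp add: power2_eq_square)
next
  case False
  then have "(- x) * (- x) \<in> P"
    using ordering_mult[OF assms] ordering_uminus_notin[OF assms] by blast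
  then show ?thesis by (simp add: power2_eq_square)
qed

lemma ordering_zero: "is_ordering P \<Longrightarrow> (0::'a::field) \<in> P"
  using ordering_square[of P 0] by simp

lemma ordering_one: "is_ordering P \<Longrightarrow> (1::'a::field) \<in> P"
  using ordering_square[of P 1] by simp

lemma ordering_minus_one: "is_ordering P \<Longrightarrow> - (1::'a::field) \<notin> P"
  using ordering_antisym[of P 1] ordering_one[of P] by fastforce

lemma ordering_uminus_iff: "is_ordering P \<Longrightarrow> x \<noteq> 0 \<Longrightarrow> - x \<in> P \<longleftrightarrow> x \<notin> P"
  using ordering_antisym ordering_uminus_notin by blast

lemma ordering_sum: assumes "is_ordering P" "\<And>i. i \<in> A \<Longrightarrow> f i \<in> P" shows "sum f A \<in> P"
  using assms(2)
  by (induction A rule: infinite_finite_induct) (simp_all add: ordering_zero ordering_add assms(1))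

lemma ordering_sum_eq_0_iff:
  assumes P: "is_ordering P" and "finite A" and "\<And>i. i \<in> A \<Longrightarrow> f i \<in> P"
  shows "sum f A = 0 \<longleftrightarrow> (\<forall>i\<in>A. f i = 0)"
  using assms(2,3)
proof (induction A rule: finite_induct)
  case (insert x F)
  have "sum f F \<in> P" by (rule ordering_sum[OF P]) (simp add: insert.prems)
  moreover have "f x \<in> P" by (simp add: insert.prems)
  ultimately have "f x + sum f F = 0 \<longleftrightarrow> f x = 0 \<and> sum f F = 0"
    using ordering_antisym[OF P, of "f x"] by (auto simp: add_eq_0_iff)
  with insert show ?case by simp
qed simp

lemma ordering_sumsq_eq_0:
  fixes x :: "nat \<Rightarrow> 'a::field" and P :: "'a set"
  assumes "is_ordering P" "sumsq n x = 0" shows "\<forall>i<n. x i = 0"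
  using assms ordering_sum_eq_0_iff[OF assms(1), of "{..<n}" "\<lambda>i. (x i)^2"]
  by (simp add: sumsq_def ordering_square)

lemma ordering_one_plus_square_neq_0:
  fixes w :: "'a::field" and P :: "'a set"
  assumes "is_ordering P" shows "1 + w^2 \<noteq> 0"
  using ordering_minus_one[OF assms] ordering_square[OF assms, of w]
  by (metis add.commute add_eq_0_iff)

definition vlinear :: "nat \<Rightarrow> nat \<Rightarrow> ((nat \<Rightarrow> 'a::field) \<Rightarrow> (nat \<Rightarrow> 'a)) \<Rightarrow> bool" where
  "vlinear m n L \<longleftrightarrow> (\<forall>x y i. i < n \<longrightarrow> L (\<lambda>j. x j + y j) i = L x i + L y i) \<and>
     (\<forall>c x i. i < n \<longrightarrow> L (\<lambda>j. c * x j) i = c * L x i) \<and>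
     (\<forall>x y. (\<forall>j<m. x j = y j) \<longrightarrow> (\<forall>i<n. L x i = L y i))"

lemma vlinearI:
  fixes L :: "(nat \<Rightarrow> 'a::field) \<Rightarrow> (nat \<Rightarrow> 'a)"
  assumes "\<And>x y i. i < n \<Longrightarrow> L (\<lambda>j. x j + y j) i = L x i + L y i"
    and "\<And>c x i. i < n \<Longrightarrow> L (\<lambda>j. c * x j) i = c * L x i"
    and "\<And>x y i. (\<And>j. j < m \<Longrightarrow> x j = y j) \<Longrightarrow> i < n \<Longrightarrow> L x i = L y i"
  shows "vlinear m n L"
  using assms unfolding vlinear_def by blast

lemma vlinear_add: "vlinear m n L \<Longrightarrow> i < n \<Longrightarrow> L (\<lambda>j. x j + y j) i = L x i + L y i"
  by (simp add: vlinear_def)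

lemma vlinear_scale: "vlinear m n L \<Longrightarrow> i < n \<Longrightarrow> L (\<lambda>j. c * x j) i = c * L x i"
  by (simp add: vlinear_def)

lemma vlinear_cong:
  assumes "vlinear m n L" "\<And>j. j < m \<Longrightarrow> x j = y j" "i < n" shows "L x i = L y i"
  using assms unfolding vlinear_def by blast

lemma vlinear_zero: "vlinear m n L \<Longrightarrow> i < n \<Longrightarrow> L (\<lambda>j. 0) i = 0"
  using vlinear_scale[of m n L i 0 "\<lambda>j. 0"] by simp

lemma vlinear_id: "n \<le> m \<Longrightarrow> vlinear m n (\<lambda>x. x)"
  by (rule vlinearI) auto

lemma vlinear_drop_vec: "vlinear (n + n) n (drop_vec n)"
  by (rule vlinearI) (auto simp: drop_vec_def)

lemma vlinear_linmap: "vlinear n n (linmap n M)"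
  by (rule vlinearI) (auto simp: linmap_def sum.distrib sum_distrib_left algebra_simps)

lemma vlinear_comp:
  fixes A B :: "(nat \<Rightarrow> 'a::field) \<Rightarrow> (nat \<Rightarrow> 'a)"
  assumes B: "vlinear m k B" and A: "vlinear k n A"
  shows "vlinear m n (\<lambda>x. A (B x))"
proof (rule vlinearI)
  fix x y :: "nat \<Rightarrow> 'a" and i assume i: "i < n"
  have "A (B (\<lambda>j. x j + y j)) i = A (\<lambda>j. B x j + B y j) i"
    by (rule vlinear_cong[OF A _ i]) (simp add: vlinear_add[OF B])
  then show "A (B (\<lambda>j. x j + y j)) i = A (B x) i + A (B y) i"
    using vlinear_add[OF A i] by simp
next
  fix c and x :: "nat \<Rightarrow> 'a" and i assume i: "i < n"
  have "A (B (\<lambda>j. c * x j)) i = A (\<lambda>j. c * B x j) i"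
    by (rule vlinear_cong[OF A _ i]) (simp add: vlinear_scale[OF B])
  then show "A (B (\<lambda>j. c * x j)) i = c * A (B x) i"
    using vlinear_scale[OF A i] by simp
next
  fix x y :: "nat \<Rightarrow> 'a" and i assume "\<And>j. j < m \<Longrightarrow> x j = y j" "i < n"
  then show "A (B x) i = A (B y) i"
    using vlinear_cong[OF A, of "B x" "B y" i] vlinear_cong[OF B] by blast
qed

lemma vlinear_plus:
  fixes A B :: "(nat \<Rightarrow> 'a::field) \<Rightarrow> (nat \<Rightarrow> 'a)"
  assumes A: "vlinear m n A" and B: "vlinear m n B"
  shows "vlinear m n (\<lambda>x j. A x j + B x j)"
proof (rule vlinearI)
  fix x y :: "nat \<Rightarrow> 'a" and i assume "\<And>j. j < m \<Longrightarrow> x j = y j" "i < n"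
  then show "A x i + B x i = A y i + B y i"
    using vlinear_cong[OF A] vlinear_cong[OF B] by metis
qed (simp_all add: vlinear_add[OF A] vlinear_add[OF B] vlinear_scale[OF A] vlinear_scale[OF B]
       algebra_simps)

lemma vlinear_mult:
  fixes A :: "(nat \<Rightarrow> 'a::field) \<Rightarrow> (nat \<Rightarrow> 'a)"
  assumes A: "vlinear m n A" shows "vlinear m n (\<lambda>x j. c * A x j)"
proof (rule vlinearI)
  fix x y :: "nat \<Rightarrow> 'a" and i assume "\<And>j. j < m \<Longrightarrow> x j = y j" "i < n"
  then show "c * A x i = c * A y i"
    using vlinear_cong[OF A] by metis
qed (simp_all add: vlinear_add[OF A] vlinear_scale[OF A] algebra_simps)

lemma vlinear_append_vec:
  assumes A: "vlinear m n A" and B: "vlinear m n B"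
  shows "vlinear m (n + n) (\<lambda>x. append_vec n (A x) (B x))"
proof (rule vlinearI)
  fix x y :: "nat \<Rightarrow> 'a" and i assume xy: "\<And>j. j < m \<Longrightarrow> x j = y j" and i: "i < n + n"
  then show "append_vec n (A x) (B x) i = append_vec n (A y) (B y) i"
    using vlinear_cong[OF A xy] vlinear_cong[OF B xy, where i = "i - n"]
    by (simp add: append_vec_def)
qed (auto simp: append_vec_def vlinear_add[OF A] vlinear_add[OF B] vlinear_scale[OF A]
       vlinear_scale[OF B])

lemma vlinear_eq_linmap:
  assumes L: "vlinear n n L"
  shows "\<exists>M. \<forall>x i. i < n \<longrightarrow> linmap n M x i = L x i"
proof -
  define e :: "nat \<Rightarrow> nat \<Rightarrow> 'a" where "e j = (\<lambda>k. if k = j then 1 else 0)" for j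
  define M where "M i j = L (e j) i" for i j
  have partial: "L (\<lambda>k. if k < m then x k else 0) i = (\<Sum>j<m. M i j * x j)" if "i < n" for x i m
  proof (induction m)
    case 0
    then show ?case using vlinear_zero[OF L \<open>i < n\<close>] by simp
  next
    case (Suc m)
    have "(\<lambda>k. if k < Suc m then x k else 0) = (\<lambda>k. (if k < m then x k else 0) + x m * e m k)"
      by (auto simp: fun_eq_iff less_Suc_eq e_def)
    then show ?case
      using Suc vlinear_add[OF L \<open>i < n\<close>] vlinear_scale[OF L \<open>i < n\<close>]
      by (simp add: M_def mult.commute)
  qed
  have "linmap n M x i = L x i" if "i < n" for x i
    using partial[OF that, where x = x and m = n]
      vlinear_cong[OF L _ that, where x = x and y = "\<lambda>k. if k < n then x k else 0"]
    by (simp add: linmap_def)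
  then show ?thesis by blast
qed

lemma isometricI:
  assumes L: "vlinear n n L" and "length a = n" and "length b = n"
    and inj: "\<And>x. (\<And>i. i < n \<Longrightarrow> L x i = 0) \<Longrightarrow> \<forall>j<n. x j = 0"
    and q: "\<And>x. qval a (L x) = qval b x"
  shows "isometric a b"
proof -
  obtain M where M: "\<And>x i. i < n \<Longrightarrow> linmap n M x i = L x i"
    using vlinear_eq_linmap[OF L] by blast
  have "qval a (linmap n M x) = qval b x" for x
    using qval_cong[of a "linmap n M x" "L x"] M q \<open>length a = n\<close> by simp
  then show ?thesis
    unfolding isometric_def using assms M by (metis (no_types, lifting))
qed

lemma isometricE:
  assumes "isometric a b"
  obtains L where "vlinear (length a) (length a) L" "length b = length a"
    "\<And>x. (\<And>i. i < length a \<Longrightarrow> L x i = 0) \<Longrightarrow> \<forall>j<length a. x j = 0"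
    "\<And>x. qval a (L x) = qval b x"
  using assms vlinear_linmap unfolding isometric_def by metis

lemma isometric_trans:
  assumes "isometric a b" "isometric b c" shows "isometric a c"
proof -
  obtain A where A: "vlinear (length a) (length a) A" "length b = length a"
    "\<And>x. (\<And>i. i < length a \<Longrightarrow> A x i = 0) \<Longrightarrow> \<forall>j<length a. x j = 0"
    "\<And>x. qval a (A x) = qval b x"
    using isometricE[OF assms(1)] by blast
  obtain B where B: "vlinear (length b) (length b) B" "length c = length b"
    "\<And>x. (\<And>i. i < length b \<Longrightarrow> B x i = 0) \<Longrightarrow> \<forall>j<length b. x j = 0"
    "\<And>x. qval b (B x) = qval c x"
    using isometricE[OF assms(2)] by blast
  show ?thesis
  proof (rule isometricI[where L = "\<lambda>x. A (B x)"])
    show "vlinear (length a) (length a) (\<lambda>x. A (B x))"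
      using vlinear_comp A B by metis
    show "\<forall>j<length a. x j = 0" if "\<And>i. i < length a \<Longrightarrow> A (B x) i = 0" for x
      using A(2,3) B(3)[of x] that by simp
  qed (use A B in simp_all)
qed

lemma hyperbolic_if_isometric: "isometric a b \<Longrightarrow> hyperbolic b \<Longrightarrow> hyperbolic a"
  unfolding hyperbolic_def using isometric_trans by blast

lemma isometric_permute:
  assumes bij: "bij_betw \<sigma> {..<n} {..<n}" and "length a = n" "length b = n"
    and ab: "\<And>i. i < n \<Longrightarrow> a ! i = b ! \<sigma> i"
  shows "isometric a b"
proof (rule isometricI[where L = "\<lambda>x i. x (\<sigma> i)" and n = n])
  have \<sigma>: "\<And>i. i < n \<Longrightarrow> \<sigma> i < n" using bij by (auto simp: bij_betw_def)
  show "vlinear n n (\<lambda>x i. x (\<sigma> i))" by (rule vlinearI) (auto simp: \<sigma>)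
  show "\<forall>j<n. x j = 0" if "\<And>i. i < n \<Longrightarrow> x (\<sigma> i) = 0" for x :: "nat \<Rightarrow> 'a"
  proof clarify
    fix j assume "j < n"
    then have "j \<in> \<sigma> ` {..<n}" using bij by (simp add: bij_betw_def)
    then show "x j = 0" using that by blast
  qed
  show "qval a (\<lambda>i. x (\<sigma> i)) = qval b x" for x :: "nat \<Rightarrow> 'a"
    unfolding qval_def using assms sum.reindex_bij_betw[OF bij, of "\<lambda>j. b ! j * (x j)^2"] by simp
qed fact+

lemma isometric_if_mset_eq: "mset a = mset b \<Longrightarrow> isometric a b"
proof -
  assume "mset a = mset b"
  then obtain p where p: "p permutes {..<length b}" "permute_list p b = a"
    by (rule mset_eq_permutation)
  have "length a = length b" using p(2) by auto
  then show "isometric a b"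
    using p permute_list_nth[OF p(1)]
    by (intro isometric_permute[OF permutes_imp_bij[OF p(1)]]) auto
qed

section \<open>Pfister's multiplicative formula\<close>

lemma sumsq_two_weights:
  "a * sumsq n (\<lambda>j. x j - b * q j) + b * sumsq n (\<lambda>j. x j + a * q j)
     = (a + b) * (sumsq n x + a * b * sumsq n q)"
proof -
  have "a * sumsq n (\<lambda>j. x j - b * q j) + b * sumsq n (\<lambda>j. x j + a * q j)
      = (\<Sum>j<n. (a + b) * ((x j)^2 + a * b * (q j)^2))"
    unfolding sumsq_def sum_distrib_left sum.distrib[symmetric]
    by (rule sum.cong) (simp_all add: power2_eq_square algebra_simps)
  also have "\<dots> = (a + b) * (sumsq n x + a * b * sumsq n q)"
    by (simp add: sumsq_def sum_distrib_left sum.distrib algebra_simps)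
  finally show ?thesis .
qed

text \<open>With \<open>Q z = Ta (Tb z\<^sub>2) / (a b)\<close>, \<open>sumsq_two_weights\<close> turns
  \<open>a |z\<^sub>1 - b Q z|\<^sup>2 + b |z\<^sub>1 + a Q z|\<^sup>2\<close> into \<open>(a + b) (|z\<^sub>1|\<^sup>2 + |z\<^sub>2|\<^sup>2)\<close>.\<close>

lemma sumsq_composition_double_nonzero:
  fixes Ta Tb :: "(nat \<Rightarrow> 'a::field) \<Rightarrow> nat \<Rightarrow> 'a"
  assumes "a \<noteq> 0" "b \<noteq> 0"
    and Ta: "vlinear n n Ta" "\<And>z. sumsq n (Ta z) = a * sumsq n z"
    and Tb: "vlinear n n Tb" "\<And>z. sumsq n (Tb z) = b * sumsq n z"
  shows "\<exists>T. vlinear (n + n) (n + n) T \<and> (\<forall>z. sumsq (n + n) (T z) = (a + b) * sumsq (n + n) z)"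
proof -
  have id: "vlinear (n + n) n (\<lambda>x. x)" by (rule vlinear_id) simp
  define Q where "Q z = (\<lambda>j. (1 / (a * b)) * Ta (Tb (drop_vec n z)) j)" for z
  define T where "T z = append_vec n (Ta (\<lambda>j. z j - b * Q z j)) (Tb (\<lambda>j. z j + a * Q z j))" for z
  have "vlinear (n + n) n Q"
    unfolding Q_def
    by (intro vlinear_mult vlinear_comp[OF vlinear_comp[OF vlinear_drop_vec Tb(1)] Ta(1)])
  then have "vlinear (n + n) n (\<lambda>z j. z j - b * Q z j)" "vlinear (n + n) n (\<lambda>z j. z j + a * Q z j)"
    using vlinear_plus[OF id vlinear_mult, of _ "- b"] vlinear_plus[OF id vlinear_mult, of _ a]
    by auto
  then have "vlinear (n + n) (n + n) T"
    unfolding T_def by (intro vlinear_append_vec vlinear_comp[OF _ Ta(1)] vlinear_comp[OF _ Tb(1)])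
  moreover have "sumsq (n + n) (T z) = (a + b) * sumsq (n + n) z" for z
  proof -
    have "sumsq n (Q z) = (1 / (a * b))^2 * (a * b * sumsq n (drop_vec n z))"
      unfolding Q_def sumsq_scale by (simp add: Ta(2) Tb(2))
    then have "a * b * sumsq n (Q z) = sumsq n (drop_vec n z)"
      using assms by (simp add: power2_eq_square)
    then show ?thesis
      by (simp add: T_def sumsq_append_vec Ta(2) Tb(2) sumsq_two_weights sumsq_add[of n z])
  qed
  ultimately show ?thesis by blast
qed

lemma sumsq_composition_double:
  fixes Ta Tb :: "(nat \<Rightarrow> 'a::field) \<Rightarrow> nat \<Rightarrow> 'a"
  assumes Ta: "vlinear n n Ta" "\<And>z. sumsq n (Ta z) = a * sumsq n z"
    and Tb: "vlinear n n Tb" "\<And>z. sumsq n (Tb z) = b * sumsq n z"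
  shows "\<exists>T. vlinear (n + n) (n + n) T \<and> (\<forall>z. sumsq (n + n) (T z) = (a + b) * sumsq (n + n) z)"
proof -
  have id: "vlinear (n + n) n (\<lambda>x. x)" by (rule vlinear_id) simp
  have diag: "\<exists>T. vlinear (n + n) (n + n) T \<and> (\<forall>z. sumsq (n + n) (T z) = c * sumsq (n + n) z)"
    if T': "vlinear n n T'" "\<And>z. sumsq n (T' z) = c * sumsq n z"
    for T' :: "(nat \<Rightarrow> 'a) \<Rightarrow> nat \<Rightarrow> 'a" and c
  proof (intro exI conjI allI)
    show "vlinear (n + n) (n + n) (\<lambda>z. append_vec n (T' z) (T' (drop_vec n z)))"
      by (intro vlinear_append_vec vlinear_comp[OF id T'(1)]
          vlinear_comp[OF vlinear_drop_vec T'(1)])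
    show "sumsq (n + n) (append_vec n (T' z) (T' (drop_vec n z))) = c * sumsq (n + n) z" for z
      by (simp add: sumsq_append_vec T'(2) sumsq_add[of n z] distrib_left)
  qed
  consider "a = 0" | "b = 0" | "a \<noteq> 0" "b \<noteq> 0" by blast
  then show ?thesis
  proof cases
    case 1 then show ?thesis using diag[OF Tb] by simp
  next
    case 2 then show ?thesis using diag[OF Ta] by simp
  next
    case 3 then show ?thesis by (rule sumsq_composition_double_nonzero[OF _ _ Ta Tb])
  qed
qed

lemma sumsq_pow2_composition:
  fixes u :: "nat \<Rightarrow> 'a::field"
  shows "\<exists>T. vlinear (2^k) (2^k) T \<and> (\<forall>z. sumsq (2^k) (T z) = sumsq (2^k) u * sumsq (2^k) z)"
proof (induction k arbitrary: u)
  case 0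
  have "vlinear 1 1 (\<lambda>x j. u 0 * x j)" by (rule vlinear_mult[OF vlinear_id]) simp
  moreover have "sumsq 1 (\<lambda>j. u 0 * z j) = sumsq 1 u * sumsq 1 z" for z
    by (simp add: sumsq_def power_mult_distrib)
  ultimately show ?case by auto
next
  case (Suc k)
  obtain Ta where Ta: "vlinear (2^k) (2^k) Ta"
      "\<And>z. sumsq (2^k) (Ta z) = sumsq (2^k) u * sumsq (2^k) z"
    using Suc.IH[of u] by blast
  obtain Tb where Tb: "vlinear (2^k) (2^k) Tb"
      "\<And>z. sumsq (2^k) (Tb z) = sumsq (2^k) (drop_vec (2^k) u) * sumsq (2^k) z"
    using Suc.IH[of "drop_vec (2^k) u"] by blast
  from sumsq_composition_double[OF Ta Tb] show ?case
    by (simp only: power_Suc mult_2 sumsq_add[of "2^k" u])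
qed

lemma sum_of_squares_zero: "sum_of_squares n (0::'a::field)"
  by (auto simp: sum_of_squares_iff_sumsq sumsq_def intro: exI[of _ "\<lambda>_. 0"])

lemma sum_of_squares_mono:
  assumes "n \<le> m" "sum_of_squares n (y::'a::field)" shows "sum_of_squares m y"
proof -
  obtain x where x: "y = sumsq n x" using assms(2) by (auto simp: sum_of_squares_iff_sumsq)
  define x' where "x' i = (if i < n then x i else 0)" for i
  have "sumsq m x' = sumsq n x' + (\<Sum>i<m - n. (x' (i + n))^2)"
    using sum_lessThan_add[where m = n and n = "m - n"] assms(1) by (simp add: sumsq_def)
  also have "\<dots> = sumsq n x" by (simp add: x'_def sumsq_def)
  finally show ?thesis using x unfolding sum_of_squares_iff_sumsq by metis
qed

lemma sum_of_squares_square: "1 \<le> n \<Longrightarrow> sum_of_squares n ((w::'a::field)^2)"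
  using sum_of_squares_mono[of 1 n "w^2"]
  by (auto simp: sum_of_squares_iff_sumsq sumsq_def intro: exI[of _ "\<lambda>_. w"])

lemma sum_of_squares_mult:
  fixes c d :: "'a::field"
  assumes "sum_of_squares (2^k) c" "sum_of_squares (2^k) d"
  shows "sum_of_squares (2^k) (c * d)"
proof -
  obtain u z where "c = sumsq (2^k) u" "d = sumsq (2^k) z"
    using assms by (auto simp: sum_of_squares_iff_sumsq)
  moreover obtain T where "\<forall>z. sumsq (2^k) (T z) = sumsq (2^k) u * sumsq (2^k) z"
    using sumsq_pow2_composition by blast
  ultimately show ?thesis by (metis sum_of_squares_iff_sumsq)
qed

lemma sum_of_squares_inverse:
  assumes "sum_of_squares (2^k) (c::'a::field)" shows "sum_of_squares (2^k) (1 / c)"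
proof -
  have "1 / c = c * (1 / c)^2" by (cases "c = 0") (simp_all add: power2_eq_square)
  then show ?thesis
    using sum_of_squares_mult[OF assms sum_of_squares_square, of "1 / c"] by simp
qed

definition block_form :: "nat \<Rightarrow> 'a::field \<Rightarrow> 'a list" where
  "block_form n s = replicate n 1 @ replicate n (- s)"

lemma length_block_form [simp]: "length (block_form n s) = n + n"
  by (simp add: block_form_def)

lemma is_form_block_form: "s \<noteq> 0 \<Longrightarrow> is_form (block_form n s)"
  by (auto simp: is_form_def block_form_def)

lemma qval_block_form: "qval (block_form n s) x = sumsq n x - s * sumsq n (drop_vec n x)"
  by (simp add: block_form_def qval_append qval_replicate)

lemma mset_concat_replicate_block_form:
  "mset (concat (replicate r (block_form n s))) = mset (block_form (r * n) s)"
  by (induction r) (simp_all add: block_form_def replicate_add)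

lemma hyperbolic_block_form_one: "hyperbolic (block_form n (1::'a::field))"
proof -
  have "isometric (block_form n (1::'a)) (concat (replicate n [1, -1]))"
    using mset_concat_replicate_block_form[of n 1 "1::'a"]
    by (intro isometric_if_mset_eq) (simp add: block_form_def)
  then show ?thesis unfolding hyperbolic_def by blast
qed

lemma pfister_replicate_minus_one: "pfister (replicate j (-1::'a::field)) = replicate (2^j) 1"
  by (induction j) (simp_all add: replicate_add[symmetric] mult_2)

lemma pfister_eq_block_form: "pfister (s # replicate j (-1::'a::field)) = block_form (2^j) s"
  by (simp add: pfister_replicate_minus_one block_form_def)

text \<open>An isotropic vector would exhibit s as a quotient of two sums of \<open>2^k\<close> squares.\<close>

lemma anisotropic_block_form:
  fixes s :: "'a::field" and P :: "'a set"
  assumes P: "is_ordering P" and s: "\<not> sum_of_squares (2^k) s"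
  shows "anisotropic (block_form (2^k) s)"
  unfolding anisotropic_def isotropic_def
proof clarify
  fix x :: "nat \<Rightarrow> 'a" and i
  assume i: "i < length (block_form (2^k) s)" "x i \<noteq> 0" and "qval (block_form (2^k) s) x = 0"
  then have q: "sumsq (2^k) x = s * sumsq (2^k) (drop_vec (2^k) x)"
    by (simp add: qval_block_form)
  show False
  proof (cases "sumsq (2^k) (drop_vec (2^k) x) = 0")
    case True
    moreover from True q have "sumsq (2^k) x = 0" by simp
    ultimately have "\<forall>i<2^k + 2^k. x i = 0"
      using vec_zero_if_halves_zero ordering_sumsq_eq_0[OF P] by blast
    then show False using i by simp
  next
    case False
    then have "s = sumsq (2^k) x * (1 / sumsq (2^k) (drop_vec (2^k) x))" using q by simp
    moreover have "sum_of_squares (2^k) (sumsq (2^k) x * (1 / sumsq (2^k) (drop_vec (2^k) x)))"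
      by (intro sum_of_squares_mult sum_of_squares_inverse) (auto simp: sum_of_squares_iff_sumsq)
    ultimately show False using s by simp
  qed
qed

lemma isometric_block_form_one:
  fixes s :: "'a::field" and P :: "'a set"
  assumes P: "is_ordering P" and "s \<noteq> 0" and "sum_of_squares (2^k) (1 / s)"
  shows "isometric (block_form (2^k) s) (block_form (2^k) 1)"
proof -
  define N :: nat where "N = 2^k"
  obtain u where u: "1 / s = sumsq N u"
    using assms(3) by (auto simp: sum_of_squares_iff_sumsq N_def)
  obtain R where R: "vlinear N N R" "\<And>z. sumsq N (R z) = sumsq N u * sumsq N z"
    using sumsq_pow2_composition[of k u] N_def by blast
  have R': "sumsq N (R z) = sumsq N z / s" for z using R(2) by (simp add: u[symmetric])
  define L where "L x = append_vec N x (R (drop_vec N x))" for x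
  have "isometric (block_form N s) (block_form N 1)"
  proof (rule isometricI[where L = L and n = "N + N"])
    show "vlinear (N + N) (N + N) L"
      unfolding L_def
      by (intro vlinear_append_vec vlinear_id vlinear_comp[OF vlinear_drop_vec R(1)]) simp
    show "\<forall>j<N + N. x j = 0" if z: "\<And>i. i < N + N \<Longrightarrow> L x i = 0" for x
    proof (rule vec_zero_if_halves_zero)
      show "\<forall>i<N. x i = 0" using z by (metis L_def append_vec_def trans_less_add1)
      have "\<forall>i<N. R (drop_vec N x) i = 0" using z[of "_ + N"] by (auto simp: L_def append_vec_def)
      then have "sumsq N (R (drop_vec N x)) = 0" by (simp add: sumsq_def)
      then show "\<forall>i<N. drop_vec N x i = 0"
        using R' \<open>s \<noteq> 0\<close> ordering_sumsq_eq_0[OF P] by simp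
    qed
    have "sumsq N (L x) = sumsq N x" for x by (rule sumsq_cong) (simp add: L_def append_vec_def)
    then show "qval (block_form N s) (L x) = qval (block_form N 1) x" for x
      using \<open>s \<noteq> 0\<close> by (simp add: qval_block_form L_def R')
  qed simp_all
  then show ?thesis by (simp add: N_def)
qed

text \<open>Since 1/s is a sum of \<open>2^(n+k)\<close> squares, \<open>2^n \<times> block_form (2^k) s\<close> is isometric to
  \<open>block_form (2^(n+k)) s \<cong> block_form (2^(n+k)) 1\<close>.\<close>

lemma torsion_form_block_form:
  fixes s :: "'a::field" and P :: "'a set"
  assumes P: "is_ordering P" and "s \<noteq> 0" and "sum_of_squares n s"
  shows "torsion_form (block_form (2^k) s)"
proof -
  define N :: nat where "N = 2^(n + k)"
  have "n < 2^n" by (rule less_exp)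
  also have "2^n \<le> N" unfolding N_def by (rule power_increasing) simp_all
  finally have "sum_of_squares N s" using assms(3) sum_of_squares_mono less_imp_le by blast
  then have "sum_of_squares (2^(n + k)) (1 / s)"
    unfolding N_def by (rule sum_of_squares_inverse)
  then have "isometric (block_form N s) (block_form N 1)"
    using isometric_block_form_one[OF P \<open>s \<noteq> 0\<close>] N_def by blast
  moreover have "isometric (concat (replicate (2^n) (block_form (2^k) s))) (block_form N s)"
    by (rule isometric_if_mset_eq)
      (simp add: mset_concat_replicate_block_form N_def power_add)
  ultimately have "hyperbolic (concat (replicate (2^n) (block_form (2^k) s)))"
    by (intro hyperbolic_if_isometric[OF isometric_trans hyperbolic_block_form_one])
  then show ?thesis unfolding torsion_form_def by (intro exI[of _ "2^n"]) simp
qed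

lemma half_sum_square_diff:
  assumes "(2::'a::field) \<noteq> 0"
  shows "((p + q) / 2)^2 - ((q - p) / 2)^2 = p * (q::'a)"
proof -
  have "((p + q) / 2)^2 - ((q - p) / 2)^2 = (p + q)^2 / 2^2 - (q - p)^2 / 2^2"
    by (simp only: power_divide)
  also have "\<dots> = ((p + q)^2 - (q - p)^2) / 2^2"
    by (rule diff_divide_distrib[symmetric])
  also have "(p + q)^2 - (q - p)^2 = 2^2 * (p * q)"
    by (simp add: power2_eq_square algebra_simps)
  also have "2^2 * (p * q) / 2^2 = p * q"
    using power_not_zero[OF assms] by (rule nonzero_mult_div_cancel_left)
  finally show ?thesis .
qed

lemma eq_0_if_half_sums_eq_0:
  assumes "(2::'a::field) \<noteq> 0" "(p + q) / 2 = 0" "(q - p) / 2 = (0::'a)"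
  shows "p = 0" "q = 0"
proof -
  have sum: "p + q = 0" and diff: "q - p = 0" using assms by simp_all
  have "2 * q = (p + q) + (q - p)" by (simp add: algebra_simps)
  also have "\<dots> = 0" by (simp only: sum diff add_0)
  finally show "q = 0" using assms(1) by simp
  then show "p = 0" using diff by simp
qed

text \<open>On each pair of coordinates (u, v) this is the substitution
  \<open>(X, Y) = (((u - v)/c + (u + v))/2, ((u + v) - (u - v)/c)/2)\<close>, which turns
  \<open>c X\<^sup>2 - c Y\<^sup>2\<close> into \<open>u\<^sup>2 - v\<^sup>2\<close>.\<close>

definition append_uminus_subst :: "'a::field list \<Rightarrow> (nat \<Rightarrow> 'a) \<Rightarrow> nat \<Rightarrow> 'a" where
  "append_uminus_subst a x i =
     (if i < length a then ((x i - x (i + length a)) / a ! i + (x i + x (i + length a))) / 2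
      else ((x (i - length a) + x i) - (x (i - length a) - x i) / a ! (i - length a)) / 2)"

lemma append_uminus_subst_nth:
  fixes a :: "'a::field list" and x :: "nat \<Rightarrow> 'a"
  assumes "i < length a"
  defines "p \<equiv> (x i - x (i + length a)) / a ! i" and "q \<equiv> x i + x (i + length a)"
  shows "append_uminus_subst a x i = (p + q) / 2"
    and "append_uminus_subst a x (i + length a) = (q - p) / 2"
  using assms by (simp_all add: append_uminus_subst_def)

lemma vlinear_append_uminus_subst:
  "vlinear (length a + length a) (length a + length a) (append_uminus_subst a)"
proof (rule vlinearI)
  show "append_uminus_subst a (\<lambda>j. x j + y j) i =
      append_uminus_subst a x i + append_uminus_subst a y i" for x y i
    by (simp add: append_uminus_subst_def add_divide_distrib diff_divide_distrib algebra_simps)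
  show "append_uminus_subst a (\<lambda>j. c * x j) i = c * append_uminus_subst a x i" for c x i
    by (simp add: append_uminus_subst_def times_divide_eq_right algebra_simps)
  show "append_uminus_subst a x i = append_uminus_subst a y i"
    if "\<And>j. j < length a + length a \<Longrightarrow> x j = y j" "i < length a + length a" for x y i
    using that by (simp add: append_uminus_subst_def)
qed

lemma append_uminus_subst_eq_0:
  fixes a :: "'a::field list"
  assumes "is_form a" and two: "(2::'a) \<noteq> 0"
    and z: "\<And>i. i < length a + length a \<Longrightarrow> append_uminus_subst a x i = 0"
  shows "\<forall>j<length a + length a. x j = 0"
proof -
  have "x i = 0 \<and> x (i + length a) = 0" if "i < length a" for i
  proof -
    have "append_uminus_subst a x i = 0" "append_uminus_subst a x (i + length a) = 0"
      using z that by simp_all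
    then have "(x i - x (i + length a)) / a ! i = 0" "x i + x (i + length a) = 0"
      unfolding append_uminus_subst_nth[OF that] by (rule eq_0_if_half_sums_eq_0[OF two])+
    then have "x (i + length a) = x i" "x i + x (i + length a) = 0"
      using \<open>is_form a\<close> that by (simp_all add: is_form_def)
    then have "2 * x i = 0" "x (i + length a) = x i" by simp_all
    then show ?thesis using two by simp
  qed
  then show ?thesis
    using vec_zero_if_halves_zero[of "length a" x] unfolding drop_vec_def by blast
qed

lemma qval_append_uminus_subst:
  fixes a :: "'a::field list"
  assumes "is_form a" and two: "(2::'a) \<noteq> 0"
  shows "qval (a @ map uminus a) (append_uminus_subst a x) = qval (block_form (length a) 1) x"
proof -
  let ?L = "append_uminus_subst a x" and ?n = "length a"
  have "qval (a @ map uminus a) ?L = qval a ?L - qval a (drop_vec ?n ?L)"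
    by (simp add: qval_append qval_uminus)
  also have "\<dots> = (\<Sum>i<?n. a ! i * ((?L i)^2 - (?L (i + ?n))^2))"
    by (simp add: qval_def drop_vec_def sum_subtractf right_diff_distrib)
  also have "\<dots> = (\<Sum>i<?n. (x i)^2 - (x (i + ?n))^2)"
  proof (rule sum.cong)
    fix i assume "i \<in> {..<?n}"
    then have "a ! i * ((?L i)^2 - (?L (i + ?n))^2)
        = a ! i * ((x i - x (i + ?n)) / a ! i * (x i + x (i + ?n)))"
      by (simp add: append_uminus_subst_nth half_sum_square_diff[OF two])
    also have "\<dots> = (x i - x (i + ?n)) * (x i + x (i + ?n))"
      using \<open>is_form a\<close> \<open>i \<in> {..<?n}\<close> by (simp add: is_form_def)
    also have "\<dots> = (x i)^2 - (x (i + ?n))^2"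
      by (simp add: power2_eq_square algebra_simps)
    finally show "a ! i * ((?L i)^2 - (?L (i + ?n))^2) = (x i)^2 - (x (i + ?n))^2" .
  qed simp
  also have "\<dots> = qval (block_form ?n 1) x"
    by (simp add: qval_block_form sumsq_def drop_vec_def sum_subtractf)
  finally show ?thesis .
qed

lemma hyperbolic_append_uminus:
  fixes a :: "'a::field list"
  assumes "is_form a" and "(2::'a) \<noteq> 0"
  shows "hyperbolic (a @ map uminus a)"
proof -
  have "isometric (a @ map uminus a) (block_form (length a) 1)"
    by (rule isometricI[OF vlinear_append_uminus_subst _ _ append_uminus_subst_eq_0[OF assms]
          qval_append_uminus_subst[OF assms]]) simp_all
  then show ?thesis using hyperbolic_if_isometric hyperbolic_block_form_one by blast
qed

lemma block_form_in_Ik: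
  fixes s :: "'a::field"
  assumes "s \<noteq> 0" and "(2::'a) \<noteq> 0"
  shows "in_Ik (Suc k) (block_form (2^k) s)"
  unfolding in_Ik_def
proof (intro exI[of _ "[(1, s # replicate k (-1))]"] conjI)
  show "\<forall>(c, as)\<in>set [(1::'a, s # replicate k (-1))].
          c \<noteq> 0 \<and> length as = Suc k \<and> (\<forall>x\<in>set as. x \<noteq> 0)"
    using assms(1) by auto
  have "map ((*) 1) (block_form (2^k) s) = block_form (2^k) s" by (simp add: map_idI)
  then show "witt_equiv (block_form (2^k) s)
     (concat (map (\<lambda>(c, as). map ((*) c) (pfister as)) [(1, s # replicate k (-1))]))"
    unfolding witt_equiv_def
    using hyperbolic_append_uminus[OF is_form_block_form[OF assms(1)] assms(2)]
    by (simp del: pfister.simps add: pfister_eq_block_form)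
qed

lemma hyperbolic_isotropic:
  fixes a :: "'a::field list"
  assumes "hyperbolic a" and "a \<noteq> []"
  shows "isotropic a"
proof -
  obtain k where "isometric a (concat (replicate k [1, -1]))"
    using assms(1) by (auto simp: hyperbolic_def)
  then obtain L where L: "vlinear (length a) (length a) L"
    "length (concat (replicate k [1::'a, -1])) = length a"
    "\<And>x. (\<And>i. i < length a \<Longrightarrow> L x i = 0) \<Longrightarrow> \<forall>j<length a. x j = 0"
    "\<And>x. qval a (L x) = qval (concat (replicate k [1, -1])) x"
    using isometricE by blast
  then obtain k' where k: "k = Suc k'" using assms(2) by (cases k) auto
  define x :: "nat \<Rightarrow> 'a" where "x i = (if i < 2 then 1 else 0)" for i
  have "drop_vec (length [1::'a, -1]) x = (\<lambda>i. 0)" by (simp add: drop_vec_def x_def fun_eq_iff)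
  moreover have "qval [1::'a, -1] x = 0" by (simp add: qval_def x_def numeral_2_eq_2)
  moreover have "concat (replicate k [1::'a, -1]) = [1, -1] @ concat (replicate k' [1, -1])"
    by (simp add: k)
  ultimately have "qval a (L x) = 0" by (simp only: L(4) qval_append qval_zero) simp
  moreover have "\<exists>i<length a. L x i \<noteq> 0"
  proof (rule ccontr)
    assume "\<not> (\<exists>i<length a. L x i \<noteq> 0)"
    then have "x 0 = 0" using L(3)[of x] assms(2) by blast
    then show False by (simp add: x_def)
  qed
  ultimately show ?thesis unfolding isotropic_def by blast
qed

section \<open>Pythagorean fields\<close>

lemma pyth_prop_1_sum_two_squares:
  assumes "pyth_prop TYPE('a::field) 1"
  shows "\<exists>w. (b::'a)^2 + c^2 = w^2"
proof -
  have "sum_of_squares 2 (b^2 + c^2)"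
    unfolding sum_of_squares_iff_sumsq
    by (rule exI[of _ "\<lambda>i. if i = 0 then b else c"]) (simp add: sumsq_def numeral_2_eq_2)
  then have "sum_of_squares 1 (b^2 + c^2)" using assms unfolding pyth_prop_def by blast
  then show ?thesis by (auto simp: sum_of_squares_def)
qed

text \<open>In a pythagorean field, \<open>\<beta>\<^sup>2 + c\<^sup>2 = \<delta>\<^sup>2\<close> makes \<open>(\<delta> - \<beta>) x + c y\<close> an isotropic
  vector of a form taking the values c at x and -c at y, where \<beta> is their polar product.\<close>

lemma isotropic_if_opposite_values:
  fixes q :: "'a::field list" and P :: "'a set"
  assumes P: "is_ordering P" and pyth: "pyth_prop TYPE('a) 1"
    and "c \<noteq> 0" and x: "qval q x = c" and y: "qval q y = - c"
  shows "\<exists>v. (\<exists>i<length q. v i \<noteq> 0) \<and> qval q v = 0"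
proof -
  define \<beta> where "\<beta> = (\<Sum>i<length q. q ! i * x i * y i)"
  obtain \<delta> where \<delta>: "\<beta>^2 + c^2 = \<delta>^2" using pyth_prop_1_sum_two_squares[OF pyth] by blast
  define s where "s = \<delta> - \<beta>"
  define v where "v i = s * x i + c * y i" for i
  have "qval q v = s^2 * c + 2 * s * c * \<beta> + c^2 * (- c)"
    unfolding v_def qval_lincomb x y \<beta>_def by simp
  also have "\<dots> = c * (\<delta>^2 - \<beta>^2 - c^2)"
    unfolding s_def by (simp add: power2_eq_square algebra_simps)
  also have "\<dots> = 0" by (simp add: \<delta>[symmetric])
  finally have "qval q v = 0" .
  moreover have "\<exists>i<length q. v i \<noteq> 0"
  proof (rule ccontr)
    assume "\<not> (\<exists>i<length q. v i \<noteq> 0)"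
    then have "\<forall>i<length q. y i = - (s / c) * x i"
      using \<open>c \<noteq> 0\<close> by (auto simp: v_def field_simps eq_neg_iff_add_eq_0)
    then have "qval q y = (s / c)^2 * c"
      using qval_cong[of q y "\<lambda>i. - (s / c) * x i"] qval_scale[of q "- (s / c)" x] x by simp
    then have "(1 + (s / c)^2) * c = c + qval q y" by (simp add: algebra_simps)
    also have "\<dots> = 0" using y by simp
    finally have "(1 + (s / c)^2) * c = 0" .
    then show False using \<open>c \<noteq> 0\<close> ordering_one_plus_square_neq_0[OF P] by simp
  qed
  ultimately show ?thesis by blast
qed

lemma anisotropic_append_self:
  fixes q :: "'a::field list" and P :: "'a set"
  assumes P: "is_ordering P" and pyth: "pyth_prop TYPE('a) 1" and "anisotropic q"
  shows "anisotropic (q @ q)"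
  unfolding anisotropic_def isotropic_def
proof clarify
  fix z i assume i: "i < length (q @ q)" "z i \<noteq> 0" and "qval (q @ q) z = 0"
  define y where "y = drop_vec (length q) z"
  have q: "qval q v \<noteq> 0" if "\<exists>i<length q. v i \<noteq> 0" for v
    using \<open>anisotropic q\<close> that unfolding anisotropic_def isotropic_def by blast
  have "qval q y = - qval q z"
    using \<open>qval (q @ q) z = 0\<close> by (simp add: qval_append y_def add_eq_0_iff)
  moreover have "(\<exists>i<length q. z i \<noteq> 0) \<or> (\<exists>i<length q. y i \<noteq> 0)"
    using i
    by (cases "i < length q") (auto simp: y_def drop_vec_def intro: exI[of _ "i - length q"])
  ultimately show False
    using q isotropic_if_opposite_values[OF P pyth, of "qval q z" q z y]
    by (metis neg_equal_0_iff_equal)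
qed

lemma anisotropic_concat_replicate_pow2:
  fixes q :: "'a::field list" and P :: "'a set"
  assumes P: "is_ordering P" and pyth: "pyth_prop TYPE('a) 1" and "anisotropic q"
  shows "anisotropic (concat (replicate (2^k) q))"
proof (induction k)
  case 0 then show ?case using assms(3) by simp
next
  case (Suc k)
  have "concat (replicate (2^Suc k) q) = concat (replicate (2^k) q) @ concat (replicate (2^k) q)"
    by (simp add: mult_2 replicate_add)
  then show ?case using anisotropic_append_self[OF P pyth Suc.IH] by simp
qed

lemma isotropic_append: "isotropic a \<Longrightarrow> isotropic (a @ b)"
proof -
  assume "isotropic a"
  then obtain x i where i: "i < length a" "x i \<noteq> 0" and q: "qval a x = 0"
    by (auto simp: isotropic_def)
  define x' where "x' i = (if i < length a then x i else 0)" for i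
  have "qval a x' = qval a x" by (rule qval_cong) (simp add: x'_def)
  moreover have "drop_vec (length a) x' = (\<lambda>i. 0)" by (simp add: x'_def drop_vec_def fun_eq_iff)
  ultimately have "qval (a @ b) x' = 0" using q by (simp add: qval_append)
  moreover have "i < length (a @ b)" "x' i \<noteq> 0" using i by (auto simp: x'_def)
  ultimately show ?thesis unfolding isotropic_def by blast
qed

text \<open>A torsion form has an isotropic multiple \<open>m \<times> a\<close>, hence an isotropic multiple
  \<open>2^m \<times> a\<close>, which in a pythagorean real field is impossible unless a is empty.\<close>

lemma anisotropic_torsion_form_pythagorean:
  fixes a :: "'a::field list" and P :: "'a set"
  assumes P: "is_ordering P" and pyth: "pyth_prop TYPE('a) 1"
    and "anisotropic a" and "torsion_form a"
  shows "a = []"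
proof (rule ccontr)
  assume "a \<noteq> []"
  obtain m where "m \<ge> 1" and hyp: "hyperbolic (concat (replicate m a))"
    using \<open>torsion_form a\<close> by (auto simp: torsion_form_def)
  then have "concat (replicate m a) \<noteq> []" using \<open>a \<noteq> []\<close> by (cases m) auto
  then have "isotropic (concat (replicate m a))" by (rule hyperbolic_isotropic[OF hyp])
  moreover have
    "concat (replicate (2^m) a) = concat (replicate m a) @ concat (replicate (2^m - m) a)"
    using less_exp[of m] by (metis concat_append le_add_diff_inverse less_imp_le replicate_add)
  ultimately have "isotropic (concat (replicate (2^m) a))" using isotropic_append by metis
  then show False
    using anisotropic_concat_replicate_pow2[OF P pyth \<open>anisotropic a\<close>]
    by (simp add: anisotropic_def)
qed

section \<open>Sylvester's law of inertia\<close>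

definition nonzero_kernel_vector ::
    "'i set \<Rightarrow> 'j set \<Rightarrow> ('i \<Rightarrow> 'j \<Rightarrow> 'a::field) \<Rightarrow> ('j \<Rightarrow> 'a) \<Rightarrow> bool" where
  "nonzero_kernel_vector I J A x \<longleftrightarrow>
     (\<forall>j. j \<notin> J \<longrightarrow> x j = 0) \<and> (\<exists>j\<in>J. x j \<noteq> 0) \<and> (\<forall>i\<in>I. (\<Sum>j\<in>J. A i j * x j) = 0)"

text \<open>One step of Gaussian elimination, with pivot \<open>A r c\<close>.\<close>

lemma nonzero_kernel_vector_eliminate:
  assumes "finite J" "c \<in> J" "A r c \<noteq> 0"
    and "nonzero_kernel_vector I (J - {c}) (\<lambda>i j. A i j - A i c * A r j / A r c) x"
  shows "nonzero_kernel_vector (insert r I) J A (x(c := - (\<Sum>j\<in>J - {c}. A r j * x j) / A r c))"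
    (is "nonzero_kernel_vector _ _ _ ?x")
proof -
  define S where "S = (\<Sum>j\<in>J - {c}. A r j * x j)"
  have split: "(\<Sum>j\<in>J. A i j * ?x j) = A i c * (- S / A r c) + (\<Sum>j\<in>J - {c}. A i j * x j)" for i
    using sum.remove[OF assms(1,2), of "\<lambda>j. A i j * ?x j"] by (simp add: S_def)
  have "(\<Sum>j\<in>J. A i j * ?x j) = 0" if "i \<in> I" for i
  proof -
    have "0 = (\<Sum>j\<in>J - {c}. (A i j - A i c * A r j / A r c) * x j)"
      using assms(4) that by (simp add: nonzero_kernel_vector_def)
    also have "\<dots> = (\<Sum>j\<in>J - {c}. A i j * x j - (A i c / A r c) * (A r j * x j))"
      by (rule sum.cong) (simp_all add: algebra_simps)
    also have "\<dots> = (\<Sum>j\<in>J - {c}. A i j * x j) - (A i c / A r c) * S"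
      by (simp add: S_def sum_subtractf sum_distrib_left)
    finally show ?thesis unfolding split by simp
  qed
  moreover have "(\<Sum>j\<in>J. A r j * ?x j) = 0" unfolding split using assms(3) by (simp add: S_def)
  ultimately show ?thesis using assms(2,4) unfolding nonzero_kernel_vector_def by auto
qed

lemma nonzero_kernel_vector_exists:
  fixes A :: "'i \<Rightarrow> 'j \<Rightarrow> 'a::field"
  assumes "finite I" "finite J" "card I < card J"
  shows "\<exists>x. nonzero_kernel_vector I J A x"
  using assms
proof (induction I arbitrary: J A rule: finite_induct)
  case empty
  then obtain j0 where "j0 \<in> J" by (metis all_not_in_conv card.empty less_irrefl)
  then have "nonzero_kernel_vector {} J A (\<lambda>j. if j = j0 then 1 else 0)"
    by (auto simp: nonzero_kernel_vector_def)
  then show ?case by blast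
next
  case (insert i0 I)
  have card_I: "card I < card J" using insert.hyps insert.prems(2) by simp
  show ?case
  proof (cases "\<forall>j\<in>J. A i0 j = 0")
    case True
    obtain x where "nonzero_kernel_vector I J A x"
      using insert.IH[OF insert.prems(1) card_I] by blast
    then have "nonzero_kernel_vector (insert i0 I) J A x"
      using True by (simp add: nonzero_kernel_vector_def)
    then show ?thesis by blast
  next
    case False
    then obtain j0 where j0: "j0 \<in> J" "A i0 j0 \<noteq> 0" by blast
    have "finite (J - {j0})" "card I < card (J - {j0})"
      using insert.hyps insert.prems j0(1) by simp_all
    then obtain x where
      "nonzero_kernel_vector I (J - {j0}) (\<lambda>i j. A i j - A i j0 * A i0 j / A i0 j0) x"
      using insert.IH by blast
    then show ?thesis
      using nonzero_kernel_vector_eliminate[where A = A and r = i0, OF insert.prems(1) j0] by blast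
  qed
qed

lemma ordering_mult_square:
  assumes P: "is_ordering P" and "c \<notin> P \<Longrightarrow> x = 0"
  shows "c * x^2 \<in> P"
proof (cases "c \<in> P")
  case True
  then show ?thesis by (rule ordering_mult[OF P _ ordering_square[OF P]])
next
  case False
  then show ?thesis using assms(2) ordering_zero[OF P] by simp
qed

lemma qval_mem_ordering:
  assumes P: "is_ordering P" and "\<And>i. i < length a \<Longrightarrow> a ! i \<notin> P \<Longrightarrow> x i = 0"
  shows "qval a x \<in> P"
  unfolding qval_def using assms by (intro ordering_sum[OF P] ordering_mult_square) auto

lemma qval_eq_0_ordering:
  assumes P: "is_ordering P" and "is_form a" and "\<And>i. i < length a \<Longrightarrow> a ! i \<notin> P \<Longrightarrow> x i = 0"
    and "qval a x = 0"
  shows "\<forall>i<length a. x i = 0"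
proof -
  have terms: "a ! i * (x i)^2 \<in> P" if "i \<in> {..<length a}" for i
    using that assms(3) by (intro ordering_mult_square[OF P]) auto
  have "(\<Sum>i\<in>{..<length a}. a ! i * (x i)^2) = 0" using assms(4) by (simp add: qval_def)
  then have "\<forall>i\<in>{..<length a}. a ! i * (x i)^2 = 0"
    using ordering_sum_eq_0_iff[OF P finite_lessThan, where f = "\<lambda>i. a ! i * (x i)^2"] terms
    by blast
  then show ?thesis using \<open>is_form a\<close> by (simp add: is_form_def)
qed

lemma card_lessThan_conj_split: "card {i. i < n \<and> Q i} + card {i. i < n \<and> \<not> Q i} = n"
proof -
  have "card ({i. i < n \<and> Q i} \<union> {i. i < n \<and> \<not> Q i}) =
      card {i. i < n \<and> Q i} + card {i. i < n \<and> \<not> Q i}"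
    by (rule card_Un_disjoint) auto
  moreover have "{i. i < n \<and> Q i} \<union> {i. i < n \<and> \<not> Q i} = {..<n}" by auto
  ultimately show ?thesis by simp
qed

lemma card_positive_entries_le:
  fixes a b :: "'a::field list" and P :: "'a set"
  assumes P: "is_ordering P" and "is_form b"
    and "length a = n" "length b = n" and q: "\<And>x. qval a (linmap n M x) = qval b x"
  shows "card {i. i < n \<and> a ! i \<in> P} \<le> card {j. j < n \<and> b ! j \<in> P}"
proof (rule ccontr)
  define I where "I = {i. i < n \<and> a ! i \<notin> P}"
  define J where "J = {j. j < n \<and> b ! j \<notin> P}"
  assume "\<not> ?thesis"
  then have "card I < card J"
    using card_lessThan_conj_split[where n = n and Q = "\<lambda>i. a ! i \<in> P"]
      card_lessThan_conj_split[where n = n and Q = "\<lambda>i. b ! i \<in> P"]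
    unfolding I_def J_def by linarith
  then obtain x where x: "nonzero_kernel_vector I J M x"
    using nonzero_kernel_vector_exists[of I J M] by (auto simp: I_def J_def)
  have "linmap n M x i = (\<Sum>j\<in>J. M i j * x j)" for i
    unfolding linmap_def using x
    by (intro sum.mono_neutral_right) (auto simp: J_def nonzero_kernel_vector_def)
  then have "qval b x \<in> P"
    using qval_mem_ordering[OF P, of a "linmap n M x"] x q \<open>length a = n\<close>
    by (auto simp: I_def nonzero_kernel_vector_def)
  moreover have "qval (map uminus b) x \<in> P"
    using qval_mem_ordering[OF P] x \<open>is_form b\<close> ordering_uminus_iff[OF P] \<open>length b = n\<close>
    by (force simp: J_def nonzero_kernel_vector_def is_form_def)
  ultimately have "qval (map uminus b) x = 0"
    using ordering_antisym[OF P] by (simp add: qval_uminus)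
  then have "\<forall>j<n. x j = 0"
    using qval_eq_0_ordering[OF P, of "map uminus b" x] x \<open>is_form b\<close> ordering_uminus_iff[OF P]
      \<open>length b = n\<close>
    by (force simp: J_def nonzero_kernel_vector_def is_form_def)
  then show False using x by (auto simp: J_def nonzero_kernel_vector_def)
qed

lemma isometric_card_positive_entries:
  fixes a b :: "'a::field list" and P :: "'a set"
  assumes P: "is_ordering P" and "is_form a" "is_form b" "isometric a b"
  shows "length (filter (\<lambda>c. c \<in> P) a) = length (filter (\<lambda>c. c \<in> P) b)"
proof -
  obtain M where n: "length b = length a" and q: "\<And>x. qval a (linmap (length a) M x) = qval b x"
    using \<open>isometric a b\<close> unfolding isometric_def by metis
  have negative: "{i. i < length c \<and> - c ! i \<in> P} = {i. i < length c \<and> c ! i \<notin> P}"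
    if "is_form c" for c
    using that ordering_uminus_iff[OF P] by (auto simp: is_form_def)
  have "is_form (map uminus b)" using \<open>is_form b\<close> by (auto simp: is_form_def)
  then have "card {i. i < length a \<and> - a ! i \<in> P} \<le> card {j. j < length a \<and> - b ! j \<in> P}"
    using card_positive_entries_le[OF P, where a = "map uminus a" and n = "length a"
        and b = "map uminus b" and M = M] q n
    by (simp add: qval_uminus cong: conj_cong)
  then have "card {i. i < length a \<and> a ! i \<notin> P} \<le> card {j. j < length a \<and> b ! j \<notin> P}"
    using negative[OF \<open>is_form a\<close>] negative[OF \<open>is_form b\<close>] n by simp
  moreover have "card {i. i < length a \<and> a ! i \<in> P} \<le> card {j. j < length a \<and> b ! j \<in> P}"
    by (rule card_positive_entries_le[OF P \<open>is_form b\<close> refl n q])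
  ultimately have "card {i. i < length a \<and> a ! i \<in> P} = card {j. j < length b \<and> b ! j \<in> P}"
    using card_lessThan_conj_split[where n = "length a" and Q = "\<lambda>i. a ! i \<in> P"]
      card_lessThan_conj_split[where n = "length a" and Q = "\<lambda>i. b ! i \<in> P"]
    unfolding n by linarith
  then show ?thesis by (simp add: length_filter_conv_card)
qed

text \<open>Half of the entries of a hyperbolic form are positive at an ordering, and a torsion
  form has a hyperbolic multiple.\<close>

lemma torsion_form_even_length:
  fixes a :: "'a::field list" and P :: "'a set"
  assumes P: "is_ordering P" and "is_form a" and "torsion_form a"
  shows "even (length a)"
proof -
  obtain m k where "m \<ge> 1"
    and iso: "isometric (concat (replicate m a)) (concat (replicate k [1, -1]))"
    using \<open>torsion_form a\<close> unfolding torsion_form_def hyperbolic_def by blast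
  have len_filter: "length (filter Q (concat (replicate r xs))) = r * length (filter Q xs)"
    for Q :: "'a \<Rightarrow> bool" and r xs
    by (induction r) simp_all
  have "m * length (filter (\<lambda>c. c \<in> P) a) = k"
    using isometric_card_positive_entries[OF P _ _ iso] \<open>is_form a\<close>
      ordering_one[OF P] ordering_minus_one[OF P]
    by (simp add: len_filter is_form_def)
  moreover have "m * length a = k * 2"
    using iso by (simp add: isometric_def length_concat sum_list_replicate)
  ultimately have "m * length a = m * (2 * length (filter (\<lambda>c. c \<in> P) a))" by simp
  then show ?thesis using \<open>m \<ge> 1\<close> by simp
qed

lemma pythagoras_number_le: "pyth_prop T N \<Longrightarrow> pythagoras_number T \<le> enat N"
  unfolding pythagoras_number_def by (auto intro: Least_le)

lemma pythagoras_number_eq_1: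
  assumes "pyth_prop T 1" shows "pythagoras_number T = 1"
proof -
  have "(LEAST p. pyth_prop T p) = 1"
    by (rule Least_equality) (use assms in \<open>auto simp: pyth_prop_def\<close>)
  then show ?thesis using assms by (auto simp: pythagoras_number_def one_enat_def)
qed

lemma pythagoras_number_ge_2:
  assumes "\<not> pyth_prop T 1" shows "2 \<le> pythagoras_number T"
proof (cases "\<exists>p. pyth_prop T p")
  case True
  then have "pyth_prop T (LEAST p. pyth_prop T p)" by (rule LeastI_ex)
  then have "1 \<le> (LEAST p. pyth_prop T p)" "(LEAST p. pyth_prop T p) \<noteq> 1"
    using assms by (auto simp: pyth_prop_def)
  then have "2 \<le> (LEAST p. pyth_prop T p)" by linarith
  then show ?thesis using True by (simp add: pythagoras_number_def numeral_eq_enat)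
qed (simp add: pythagoras_number_def)

lemma anisotropic_torsion_pfister_form:
  fixes P :: "'a::field set"
  assumes P: "is_ordering P" and "\<not> pyth_prop TYPE('a) (2^k)"
  obtains s :: 'a
  where "s \<noteq> 0" "anisotropic (block_form (2^k) s)" "torsion_form (block_form (2^k) s)"
proof -
  obtain s :: 'a and n where s: "sum_of_squares n s" "\<not> sum_of_squares (2^k) s"
    using assms(2) unfolding pyth_prop_def by auto
  have "s \<noteq> 0"
  proof
    assume "s = 0"
    then show False using s(2) sum_of_squares_zero[of "2^k", where 'a = 'a] by simp
  qed
  then show ?thesis
    using that anisotropic_block_form[OF P s(2)] torsion_form_block_form[OF P _ s(1)] by blast
qed

lemma u_invariant_ge:
  fixes P :: "'a::field set"
  assumes P: "is_ordering P" and "\<not> pyth_prop TYPE('a) (2^k)"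
  shows "enat (2^Suc k) \<le> u_invariant TYPE('a)"
proof -
  obtain s :: 'a
    where "s \<noteq> 0" "anisotropic (block_form (2^k) s)" "torsion_form (block_form (2^k) s)"
    using anisotropic_torsion_pfister_form[OF assms] .
  then show ?thesis
    unfolding u_invariant_def using is_form_block_form[OF \<open>s \<noteq> 0\<close>]
    by (intro Sup_upper) (auto intro!: exI[of _ "block_form (2^k) s"])
qed

lemma u_invariant_pythagorean:
  fixes P :: "'a::field set"
  assumes "is_ordering P" and "pyth_prop TYPE('a) 1"
  shows "u_invariant TYPE('a) = 0"
proof -
  have "u_invariant TYPE('a) \<le> 0"
    unfolding u_invariant_def
    by (rule Sup_least)
      (use anisotropic_torsion_form_pythagorean[OF assms] in \<open>auto simp: zero_enat_def\<close>)
  then show ?thesis by simp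
qed

lemma u_invariant_even:
  fixes P :: "'a::field set"
  assumes P: "is_ordering P" and u: "u_invariant TYPE('a) = enat U"
  shows "even U"
proof -
  define S where "S = {enat (length a) | a :: 'a list. is_form a \<and> anisotropic a \<and> torsion_form a}"
  have "enat 0 \<in> S"
    using hyperbolic_block_form_one[of 0] unfolding S_def
    by (auto simp: torsion_form_def is_form_def anisotropic_def isotropic_def block_form_def
        intro!: exI[of _ "[] :: 'a list"] exI[of _ 1])
  moreover have "finite S"
  proof (rule ccontr)
    assume "infinite S"
    then have "u_invariant TYPE('a) = \<infinity>"
      using \<open>enat 0 \<in> S\<close> by (auto simp: u_invariant_def S_def[symmetric] Sup_enat_def)
    then show False using u by simp
  qed
  ultimately have "Sup S \<in> S" by (auto simp: Sup_enat_def)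
  then have "enat U \<in> S" using u by (simp add: u_invariant_def S_def)
  then obtain a :: "'a list" where "enat U = enat (length a)" "is_form a" "torsion_form a"
    unfolding S_def by blast
  then show ?thesis using torsion_form_even_length[OF P] by simp
qed

lemma admissible_pairs_finite:
  "u = enat (2 * n) \<Longrightarrow> 2^m \<le> 2 * n \<Longrightarrow> p \<le> enat (2^m) \<Longrightarrow> 2 \<le> p \<Longrightarrow>
    (p, u) \<in> admissible_pairs"
  unfolding admissible_pairs_def by blast

lemma admissible_pairs_infinite: "2 \<le> p \<Longrightarrow> (p, \<infinity>) \<in> admissible_pairs"
  by (simp add: admissible_pairs_def)

lemma admissible_pairs_one_zero: "(1, 0) \<in> admissible_pairs"
  by (simp add: admissible_pairs_def)

lemma admissible_pairs_real_field:
  fixes P :: "'a::field set"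
  assumes P: "is_ordering P"
  shows "(pythagoras_number TYPE('a), u_invariant TYPE('a)) \<in> admissible_pairs"
proof (cases "pyth_prop TYPE('a) 1")
  case True
  then show ?thesis
    using pythagoras_number_eq_1[OF True] u_invariant_pythagorean[OF P True]
      admissible_pairs_one_zero
    by simp
next
  case not_pyth: False
  then have p: "2 \<le> pythagoras_number TYPE('a)" by (rule pythagoras_number_ge_2)
  show ?thesis
  proof (cases "u_invariant TYPE('a)")
    case (enat U)
    have "\<exists>m. pyth_prop TYPE('a) (2^m)"
    proof (rule ccontr)
      assume "\<nexists>m. pyth_prop TYPE('a) (2^m)"
      then have "2^Suc U \<le> U" using u_invariant_ge[OF P, of U] enat by simp
      then show False using less_exp[of "Suc U"] by simp
    qed
    define m where "m = (LEAST m. pyth_prop TYPE('a) (2^m))"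
    have m: "pyth_prop TYPE('a) (2^m)" "\<And>j. j < m \<Longrightarrow> \<not> pyth_prop TYPE('a) (2^j)"
      unfolding m_def using \<open>\<exists>m. pyth_prop TYPE('a) (2^m)\<close>
      by (auto intro: LeastI_ex dest: not_less_Least)
    then obtain j where "m = Suc j" using not_pyth by (cases m) auto
    then have "2^m \<le> U" using u_invariant_ge[OF P m(2)[of j]] enat by simp
    moreover obtain n where "U = 2 * n" using u_invariant_even[OF P enat] by (rule evenE)
    ultimately have "u_invariant TYPE('a) = enat (2 * n)" "2^m \<le> 2 * n" using enat by simp_all
    then show ?thesis using admissible_pairs_finite pythagoras_number_le[OF m(1)] p by blast
  qed (use p admissible_pairs_infinite in simp)
qed

text \<open>The form \<open>block_form (2^(k-1)) s\<close> lies in \<open>I^k_t F\<close> but is not hyperbolic.\<close>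

lemma pythagoras_number_le_if_Ikt_zero:
  fixes P :: "'a::field set"
  assumes P: "is_ordering P" and "(2::'a) \<noteq> 0" and "k \<ge> 1" and "Ikt_zero TYPE('a) k"
  shows "pythagoras_number TYPE('a) \<le> enat (2^(k - 1))"
proof (rule ccontr)
  assume "\<not> ?thesis"
  then have "\<not> pyth_prop TYPE('a) (2^(k - 1))" using pythagoras_number_le by blast
  then obtain s :: 'a where s: "s \<noteq> 0" "anisotropic (block_form (2^(k - 1)) s)"
      "torsion_form (block_form (2^(k - 1)) s)"
    using anisotropic_torsion_pfister_form[OF P] by blast
  have "in_Ik k (block_form (2^(k - 1)) s)"
    using block_form_in_Ik[OF s(1) assms(2), of "k - 1"] \<open>k \<ge> 1\<close> by simp
  then have "hyperbolic (block_form (2^(k - 1)) s)"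
    using assms(4) s is_form_block_form unfolding Ikt_zero_def by blast
  then have "isotropic (block_form (2^(k - 1)) s)"
    by (rule hyperbolic_isotropic) (simp add: block_form_def)
  then show False using s(2) by (simp add: anisotropic_def)
qed

theorem theorem2p4:
  assumes "(2::'a::field) \<noteq> 0"
    and "real_field TYPE('a)"
  shows "(pythagoras_number TYPE('a), u_invariant TYPE('a)) \<in> admissible_pairs \<and>
         (\<forall>k\<ge>1. Ikt_zero TYPE('a) k \<longrightarrow> pythagoras_number TYPE('a) \<le> enat (2 ^ (k - 1)))"
proof -
  obtain P :: "'a set" where P: "is_ordering P"
    using assms(2) by (auto simp: real_field_def)
  show ?thesis
    using admissible_pairs_real_field[OF P] pythagoras_number_le_if_Ikt_zero[OF P assms(1)] by blast
qed

end
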